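(* Let $V$ be a nonempty set, $E\subset V\times V$, $W\subset V$, and let $B,C\subset V$ satisfy $B\cap C=\emptyset$, $B\cap W=\emptyset$, $C\cap W=\emptyset$. Let $b\in B$ and $c\in C$ be such that $b\,A_W\,c$ and $\operatorname{cl}_W(\{b\})\cap\operatorname{cl}_W(\{c\})=\emptyset$. Then there exist $w_b,w_c\in W$ with $w_b\,C_W\,w_c$ such that $\operatorname{cl}_W(\{b\})\cap\operatorname{cl}_W(\{w_b\})\neq\emptyset$ and $\operatorname{cl}_W(\{c\})\cap\operatorname{cl}_W(\{w_c\})\neq\emptyset$.
   Context: Relations on $V$: $x\,R\,y$ means $(x,y)\in R$; composition $RR'$: $x(RR')y$ iff there is $z$ with $xRz$ and $zR'y$; $R^{-1}$ is the converse; $R^0=\Delta$, $R^{n+1}=RR^n$, $R^+=\bigcup_{k\ge1}R^k$, $R^*=\bigcup_{k\ge0}R^k$. For $S\subset V$, $\Delta_S=\{(x,x):x\in S\}$, $\Delta=\Delta_V$. For any relation $F$, $\mathcal T_F=\{O\subset V: OF\subset O\}$ is a topology on $V$, where $OF=\{y:\exists o\in O,\ oFy\}$. With $W^c=V\setminus W$: $E_W=\Delta_{W^c}E$; $B_W=E(E_W)^*$; $B_W^-=(B_W)^{-1}=(E_W^{-1})^*E^{-1}$; $K_W=B_W^-\Delta_{W^c}B_W$; $C_W=(\Delta_WK_W\Delta_W)^+\cup\Delta_W$ (a partial equivalence relation); $A_W=\Delta\cup B_W\cup B_W^-\cup K_W\cup(B_W\cup K_W)\,C_W\,(B_W^-\cup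 K_W^{-1})$. For $S\subset V$, $\operatorname{cl}_W(S)$ is the topological closure of $S$ in the topology $\mathcal T_{E_W}$. *)

theory Defs
  imports "HOL-Analysis.Analysis"
begin

definition rstar :: "'a set \<Rightarrow> 'a rel \<Rightarrow> 'a rel" where
  "rstar V R = Id_on V \<union> R\<^sup>+"

definition EW :: "'a set \<Rightarrow> 'a rel \<Rightarrow> 'a set \<Rightarrow> 'a rel" where
  "EW V E W = Id_on (V - W) O E"

definition BW :: "'a set \<Rightarrow> 'a rel \<Rightarrow> 'a set \<Rightarrow> 'a rel" where
  "BW V E W = E O rstar V (EW V E W)"

definition BWm :: "'a set \<Rightarrow> 'a rel \<Rightarrow> 'a set \<Rightarrow> 'a rel" where
  "BWm V E W = converse (BW V E W)"

definition KW :: "'a set \<Rightarrow> 'a rel \<Rightarrow> 'a set \<Rightarrow> 'a rel" where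
  "KW V E W = BWm V E W O Id_on (V - W) O BW V E W"

definition CW :: "'a set \<Rightarrow> 'a rel \<Rightarrow> 'a set \<Rightarrow> 'a rel" where
  "CW V E W = (Id_on W O KW V E W O Id_on W)\<^sup>+ \<union> Id_on W"

definition AW :: "'a set \<Rightarrow> 'a rel \<Rightarrow> 'a set \<Rightarrow> 'a rel" where
  "AW V E W = Id_on V \<union> BW V E W \<union> BWm V E W \<union> KW V E W
     \<union> (BW V E W \<union> KW V E W) O CW V E W O (BWm V E W \<union> converse (KW V E W))"

definition rel_topology :: "'a set \<Rightarrow> 'a rel \<Rightarrow> 'a topology" where
  "rel_topology V F = topology (\<lambda>U. U \<subseteq> V \<and> F `` U \<subseteq> U)"

definition clW :: "'a set \<Rightarrow> 'a rel \<Rightarrow> 'a set \<Rightarrow> 'a set \<Rightarrow> 'a set" where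
  "clW V E W S = (rel_topology V (EW V E W)) closure_of S"

end

theory Submission
  imports Defs
begin

text \<open>The open sets of \<open>\<T>\<^sub>F\<close> are the \<open>F\<close>-closed sets, so every open neighbourhood of \<open>x\<close>
  contains everything reachable from \<open>x\<close> along \<open>F\<close>; hence \<open>x \<in> cl {s}\<close> whenever \<open>x F\<^sup>* s\<close>.
  A \<open>B\<^sub>W\<close>-step out of a point \<open>u \<notin> W\<close> is such an \<open>E\<^sub>W\<close>-path, so \<open>u \<in> cl\<^sub>W {u} \<inter> cl\<^sub>W {v}\<close>
  whenever \<open>u B\<^sub>W v\<close>, and likewise \<open>x K\<^sub>W y\<close> (via the common \<open>B\<^sub>W\<close>-source outside \<open>W\<close>) forces
  \<open>cl\<^sub>W {x} \<inter> cl\<^sub>W {y} \<noteq> {}\<close>. So if \<open>b A\<^sub>W c\<close> with disjoint closures, it can only come from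
  the last summand of \<open>A\<^sub>W\<close>, whose middle \<open>C\<^sub>W\<close>-link joins two points of \<open>W\<close>.\<close>

lemma openin_rel_topology:
  "openin (rel_topology V F) U \<longleftrightarrow> U \<subseteq> V \<and> F `` U \<subseteq> U"
proof -
  have "istopology (\<lambda>U. U \<subseteq> V \<and> F `` U \<subseteq> U)"
    unfolding istopology_def by blast
  then show ?thesis
    unfolding rel_topology_def by (simp add: topology_inverse')
qed

lemma topspace_rel_topology:
  assumes "F `` V \<subseteq> V"
  shows "topspace (rel_topology V F) = V"
  using assms openin_subset[of "rel_topology V F"]
  by (metis openin_rel_topology openin_topspace order.refl subset_antisym)

lemma rtrancl_imp_in_closure_of:
  assumes closed: "F `` V \<subseteq> V" and "x \<in> V" and path: "(x, s) \<in> F\<^sup>*"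
  shows "x \<in> rel_topology V F closure_of {s}"
proof -
  have "s \<in> T" if "x \<in> T" and "openin (rel_topology V F) T" for T
  proof -
    have "F\<^sup>* `` T = T"
      using that(2) by (simp add: openin_rel_topology Image_closed_trancl)
    then show ?thesis
      using path \<open>x \<in> T\<close> by blast
  qed
  then show ?thesis
    using \<open>x \<in> V\<close> by (auto simp: in_closure_of topspace_rel_topology[OF closed])
qed

lemma CW_subset: "CW V E W \<subseteq> W \<times> W"
proof -
  have "(Id_on W O KW V E W O Id_on W)\<^sup>+ \<subseteq> W \<times> W"
    by (rule trancl_subset_Sigma) blast
  then show ?thesis
    unfolding CW_def by blast
qed

context
  fixes V :: "'a set" and E :: "'a rel" and W :: "'a set"
  assumes E_carrier: "E \<subseteq> V \<times> V"
begin

lemma EW_Image_subset: "EW V E W `` V \<subseteq> V"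
  using E_carrier unfolding EW_def by blast

lemma rtrancl_EW_imp_in_clW:
  "x \<in> V \<Longrightarrow> (x, s) \<in> (EW V E W)\<^sup>* \<Longrightarrow> x \<in> clW V E W {s}"
  unfolding clW_def by (rule rtrancl_imp_in_closure_of[OF EW_Image_subset])

lemma in_clW_self: "x \<in> V \<Longrightarrow> x \<in> clW V E W {x}"
  by (simp add: rtrancl_EW_imp_in_clW)

lemma BW_imp_rtrancl_EW:
  assumes uv: "(u, v) \<in> BW V E W" and "u \<notin> W"
  shows "(u, v) \<in> (EW V E W)\<^sup>*"
proof -
  obtain z where uz: "(u, z) \<in> E" and zv: "(z, v) \<in> rstar V (EW V E W)"
    using uv unfolding BW_def by blast
  have "(u, z) \<in> EW V E W"
    using uz E_carrier \<open>u \<notin> W\<close> unfolding EW_def by blast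
  moreover have "(z, v) \<in> (EW V E W)\<^sup>*"
    using zv unfolding rstar_def by auto
  ultimately show ?thesis
    by simp
qed

lemma BW_imp_in_clW:
  "(u, v) \<in> BW V E W \<Longrightarrow> u \<notin> W \<Longrightarrow> u \<in> clW V E W {v}"
  using E_carrier BW_imp_rtrancl_EW rtrancl_EW_imp_in_clW unfolding BW_def by blast

lemma BW_imp_clW_meet:
  "(u, v) \<in> BW V E W \<Longrightarrow> u \<in> V \<Longrightarrow> u \<notin> W \<Longrightarrow> clW V E W {u} \<inter> clW V E W {v} \<noteq> {}"
  using BW_imp_in_clW in_clW_self by blast

lemma KW_imp_clW_meet:
  assumes "(x, y) \<in> KW V E W"
  shows "clW V E W {x} \<inter> clW V E W {y} \<noteq> {}"
proof -
  obtain u where "u \<notin> W" "(u, x) \<in> BW V E W" "(u, y) \<in> BW V E W"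
    using assms unfolding KW_def BWm_def by blast
  then show ?thesis
    using BW_imp_in_clW by blast
qed

lemma AW_with_disjoint_clW_factors:
  assumes bc: "(b, c) \<in> AW V E W" and disjoint: "clW V E W {b} \<inter> clW V E W {c} = {}"
    and b: "b \<in> V" "b \<notin> W" and c: "c \<in> V" "c \<notin> W"
  obtains x y where "(b, x) \<in> BW V E W \<union> KW V E W" and "(x, y) \<in> CW V E W"
    and "(y, c) \<in> BWm V E W \<union> converse (KW V E W)"
proof -
  have "(b, c) \<notin> Id_on V"
    using disjoint in_clW_self[OF b(1)] by blast
  moreover have "(b, c) \<notin> BW V E W"
    using disjoint BW_imp_clW_meet b by blast
  moreover have "(b, c) \<notin> BWm V E W"
    using disjoint BW_imp_clW_meet c unfolding BWm_def by blast
  moreover have "(b, c) \<notin> KW V E W"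
    using disjoint KW_imp_clW_meet by blast
  ultimately show ?thesis
    using bc that unfolding AW_def by blast
qed

end

theorem lemma1:
  fixes V :: "'a set" and E :: "'a rel" and W B C :: "'a set" and b c :: 'a
  assumes "V \<noteq> {}" and "E \<subseteq> V \<times> V" and "W \<subseteq> V"
    and "B \<subseteq> V" and "C \<subseteq> V"
    and "B \<inter> C = {}" and "B \<inter> W = {}" and "C \<inter> W = {}"
    and "b \<in> B" and "c \<in> C"
    and "(b, c) \<in> AW V E W"
    and "clW V E W {b} \<inter> clW V E W {c} = {}"
  shows "\<exists>wb \<in> W. \<exists>wc \<in> W. (wb, wc) \<in> CW V E W
           \<and> clW V E W {b} \<inter> clW V E W {wb} \<noteq> {}
           \<and> clW V E W {c} \<inter> clW V E W {wc} \<noteq> {}"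
proof -
  note E = \<open>E \<subseteq> V \<times> V\<close>
  have b: "b \<in> V" "b \<notin> W" and c: "c \<in> V" "c \<notin> W"
    using assms by auto
  obtain x y where bx: "(b, x) \<in> BW V E W \<union> KW V E W" and xy: "(x, y) \<in> CW V E W"
    and yc: "(y, c) \<in> BWm V E W \<union> converse (KW V E W)"
    using AW_with_disjoint_clW_factors[OF E \<open>(b, c) \<in> AW V E W\<close> _ b c] assms(12) by blast
  have "x \<in> W" "y \<in> W"
    using xy CW_subset by auto
  moreover have "clW V E W {b} \<inter> clW V E W {x} \<noteq> {}"
    using bx BW_imp_clW_meet[OF E _ b] KW_imp_clW_meet[OF E] by blast
  moreover have "clW V E W {c} \<inter> clW V E W {y} \<noteq> {}"
    using yc BW_imp_clW_meet[OF E _ c] KW_imp_clW_meet[OF E] unfolding BWm_def by blast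
  ultimately show ?thesis
    using xy by blast
qed

end
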